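(* Consider the setting described in the context, with value functions $U^o_t$, $t=0,\dots,T$. For every bound $B>0$ there exists a constant $K>0$ such that for all $t=0,\dots,T$ and all symmetric positive semidefinite $P,Q\in\mathbb{R}^{n\times n}$ with $\|P\|_F\le B$ and $\|Q\|_F\le B$, $$|U^o_t(P)-U^o_t(Q)|\le K\|P-Q\|_F.$$
   Context: Fix $T\in\mathbb{N}$, matrices $A_0,\dots,A_T\in\mathbb{R}^{n\times n}$, a symmetric positive definite $\mathcal W\in\mathbb{R}^{n\times n}$, and $N$ sensors: for $i\in\{1,\dots,N\}$ and $t=0,\dots,T$, matrices $C^i_t\in\mathbb{R}^{m_i\times n}$ and symmetric positive definite $\mathcal V^i\in\mathbb{R}^{m_i\times m_i}$. Let $R^i_t={C^i_t}^{\mathsf T}(\mathcal V^i)^{-1}C^i_t$ and $h_t(M)=A_{t-1}MA_{t-1}^{\mathsf T}+\mathcal W$. For a symmetric positive semidefinite $M$ and a positive semidefinite $R$ define the measurement update $\Phi(R,M)=M(I+RM)^{-1}$ (which equals $(M^{-1}+R)^{-1}$ when $M$ is invertible). For a relaxed schedule $\theta=\{\theta_k\}_{k=t}^T$ with each $\theta_k=(\theta^1_k,\dots,\theta^N_k)$ in the probability simplex ($\theta^i_k\in[0,1]$, $\sum_i\theta^i_k=1$), and initial prediction covariance $P_{t|t-1}=P$, define recursively $P_k=\Phi\big(\sum_{i=1}^N\theta^i_kR^i_k,\,P_{k|k-1}\big)$ and $P_{k+1|k}=h_{k+1}(P_k)$ for $k=t,\dots,T$. The relaxed value function is $U^o_t(P)=\min_{\theta}\sum_{k=t}^T\mathrm{tr}(P_k)$,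 the minimum over all such relaxed schedules from time $t$ to $T$. $\|\cdot\|_F$ is the Frobenius norm. *)

theory Defs
  imports "Jordan_Normal_Form.Matrix"
begin

text \<open>Matrices are Jordan_Normal_Form matrices (real mat), whose dimensions
are values, so that sensors may have different output dimensions m_i.\<close>

definition mtrace :: "real mat \<Rightarrow> real" where
  "mtrace M = (\<Sum>i<dim_row M. M $$ (i, i))"

definition frob_norm :: "real mat \<Rightarrow> real" where
  "frob_norm M = sqrt (\<Sum>i<dim_row M. \<Sum>j<dim_col M. (M $$ (i, j))\<^sup>2)"

definition sym_mat :: "real mat \<Rightarrow> bool" where
  "sym_mat M \<longleftrightarrow> transpose_mat M = M"

definition psd_mat :: "nat \<Rightarrow> real mat \<Rightarrow> bool" where
  "psd_mat n M \<longleftrightarrow> M \<in> carrier_mat n n \<and> sym_mat M \<and>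
     (\<forall>v \<in> carrier_vec n. v \<bullet> (M *\<^sub>v v) \<ge> 0)"

definition pd_mat :: "nat \<Rightarrow> real mat \<Rightarrow> bool" where
  "pd_mat n M \<longleftrightarrow> M \<in> carrier_mat n n \<and> sym_mat M \<and>
     (\<forall>v \<in> carrier_vec n. v \<noteq> 0\<^sub>v n \<longrightarrow> v \<bullet> (M *\<^sub>v v) > 0)"

definition minv :: "real mat \<Rightarrow> real mat" where
  "minv M = (SOME B. B \<in> carrier_mat (dim_row M) (dim_row M) \<and>
       M * B = 1\<^sub>m (dim_row M) \<and> B * M = 1\<^sub>m (dim_row M))"

definition info_mat :: "real mat \<Rightarrow> real mat \<Rightarrow> real mat" where
  "info_mat C V = transpose_mat C * minv V * C"

definition Phi :: "real mat \<Rightarrow> real mat \<Rightarrow> real mat" where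
  "Phi R M = M * minv (1\<^sub>m (dim_row M) + R * M)"

definition hpred :: "real mat \<Rightarrow> real mat \<Rightarrow> real mat \<Rightarrow> real mat" where
  "hpred Ak W M = Ak * M * transpose_mat Ak + W"

text \<open>Relaxed schedules from time t to T over sensors 1..N:
  theta k i is theta^i_k; only values for k in {t..T}, i in {1..N} matter.\<close>
definition relaxed_schedules :: "nat \<Rightarrow> nat \<Rightarrow> nat \<Rightarrow> (nat \<Rightarrow> nat \<Rightarrow> real) set" where
  "relaxed_schedules N t T = {\<theta>. \<forall>k\<in>{t..T}.
      (\<forall>i\<in>{1..N}. 0 \<le> \<theta> k i \<and> \<theta> k i \<le> 1) \<and> (\<Sum>i=1..N. \<theta> k i) = 1}"

definition wsum :: "nat \<Rightarrow> nat \<Rightarrow> (nat \<Rightarrow> nat \<Rightarrow> real mat) \<Rightarrow> (nat \<Rightarrow> nat \<Rightarrow> real) \<Rightarrow> nat \<Rightarrow> real mat" where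
  "wsum n N R \<theta> k = foldr (\<lambda>i M. \<theta> k i \<cdot>\<^sub>m R i k + M) [1..<Suc N] (0\<^sub>m n n)"

text \<open>Cost sum_{j=k}^{k+d} tr(P_j) with prediction covariance P_{k|k-1} = P.
  R i j is the matrix R^i_j.\<close>
fun relaxed_cost :: "(nat \<Rightarrow> real mat) \<Rightarrow> real mat \<Rightarrow> nat \<Rightarrow> (nat \<Rightarrow> nat \<Rightarrow> real mat)
     \<Rightarrow> (nat \<Rightarrow> nat \<Rightarrow> real) \<Rightarrow> nat \<Rightarrow> nat \<Rightarrow> real mat \<Rightarrow> real" where
  "relaxed_cost A W N R \<theta> 0 k P =
     mtrace (Phi (wsum (dim_row P) N R \<theta> k) P)"
| "relaxed_cost A W N R \<theta> (Suc d) k P =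
     (let Pk = Phi (wsum (dim_row P) N R \<theta> k) P
      in mtrace Pk + relaxed_cost A W N R \<theta> d (Suc k) (hpred (A k) W Pk))"

definition U_relaxed :: "(nat \<Rightarrow> real mat) \<Rightarrow> real mat \<Rightarrow> nat \<Rightarrow> (nat \<Rightarrow> nat \<Rightarrow> real mat)
     \<Rightarrow> nat \<Rightarrow> nat \<Rightarrow> real mat \<Rightarrow> real" where
  "U_relaxed A W N R T t P =
     (INF \<theta> \<in> relaxed_schedules N t T. relaxed_cost A W N R \<theta> (T - t) t P)"

end

theory Submission
  imports Defs "Jordan_Normal_Form.Determinant"
begin

(* Each stage of the relaxed cost is Lipschitz on bounded sets of positive semidefinite
   matrices, with constants that do not depend on the schedule. The measurement update
   Phi(R, P) = P X_P with X_P = (I + R P)^-1 satisfies Phi(R, P) - Phi(R, Q) = X_P^T (P - Q) X_Q,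
   and 0 <= Phi(R, P) <= P bounds X_P = I - R Phi(R, P) in terms of R and P; the prediction
   step is affine. Induction along the horizon gives a Lipschitz constant for the cost of
   every schedule that is independent of the schedule, hence one for their infimum.
   All estimates use the entrywise l1 norm, which is submultiplicative and dominated by a
   multiple of the Frobenius norm. *)

lemma abs_INF_diff_le:
  fixes f g :: "'a \<Rightarrow> real"
  assumes S: "S \<noteq> {}" and f: "bdd_below (f ` S)" and g: "bdd_below (g ` S)"
    and diff: "\<And>x. x \<in> S \<Longrightarrow> \<bar>f x - g x\<bar> \<le> M"
  shows "\<bar>(INF x\<in>S. f x) - (INF x\<in>S. g x)\<bar> \<le> M"
proof -
  have "(INF x\<in>S. f x) - M \<le> (INF x\<in>S. g x)"
    using cINF_lower[OF f] diff by (intro cINF_greatest[OF S]) fastforce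
  moreover have "(INF x\<in>S. g x) - M \<le> (INF x\<in>S. f x)"
    using cINF_lower[OF g] diff by (intro cINF_greatest[OF S]) fastforce
  ultimately show ?thesis by linarith
qed

section \<open>The entrywise l1 norm\<close>

definition l1_norm :: "real mat \<Rightarrow> real" where
  "l1_norm M = (\<Sum>i<dim_row M. \<Sum>j<dim_col M. \<bar>M $$ (i, j)\<bar>)"

lemma l1_norm_nonneg: "l1_norm M \<ge> 0"
  unfolding l1_norm_def by (intro sum_nonneg) auto

lemma l1_norm_add_le:
  assumes "A \<in> carrier_mat r c" "B \<in> carrier_mat r c"
  shows "l1_norm (A + B) \<le> l1_norm A + l1_norm B"
proof -
  have "l1_norm (A + B) = (\<Sum>i<r. \<Sum>j<c. \<bar>A $$ (i, j) + B $$ (i, j)\<bar>)"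
    unfolding l1_norm_def using assms by (intro sum.cong) auto
  also have "\<dots> \<le> (\<Sum>i<r. \<Sum>j<c. \<bar>A $$ (i, j)\<bar> + \<bar>B $$ (i, j)\<bar>)"
    by (intro sum_mono abs_triangle_ineq)
  also have "\<dots> = l1_norm A + l1_norm B"
    unfolding l1_norm_def using assms by (simp add: sum.distrib)
  finally show ?thesis .
qed

lemma l1_norm_minus_le:
  assumes "A \<in> carrier_mat r c" "B \<in> carrier_mat r c"
  shows "l1_norm (A - B) \<le> l1_norm A + l1_norm B"
proof -
  have "l1_norm (A - B) = (\<Sum>i<r. \<Sum>j<c. \<bar>A $$ (i, j) - B $$ (i, j)\<bar>)"
    unfolding l1_norm_def using assms by (intro sum.cong) auto
  also have "\<dots> \<le> (\<Sum>i<r. \<Sum>j<c. \<bar>A $$ (i, j)\<bar> + \<bar>B $$ (i, j)\<bar>)"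
    by (intro sum_mono abs_triangle_ineq4)
  also have "\<dots> = l1_norm A + l1_norm B"
    unfolding l1_norm_def using assms by (simp add: sum.distrib)
  finally show ?thesis .
qed

lemma l1_norm_smult: "l1_norm (c \<cdot>\<^sub>m A) = \<bar>c\<bar> * l1_norm A"
  unfolding l1_norm_def by (simp add: sum_distrib_left abs_mult)

lemma l1_norm_one: "l1_norm (1\<^sub>m n) = real n"
proof -
  have "l1_norm (1\<^sub>m n) = (\<Sum>i<n. \<Sum>j<n. if i = j then 1 else 0)"
    unfolding l1_norm_def by (intro sum.cong) auto
  also have "\<dots> = (\<Sum>i<n. 1)" by (intro sum.cong) auto
  finally show ?thesis by simp
qed

lemma l1_norm_zero: "l1_norm (0\<^sub>m r c) = 0"
  unfolding l1_norm_def by simp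

lemma l1_norm_transpose: "l1_norm (transpose_mat A) = l1_norm A"
  unfolding l1_norm_def by (simp add: sum.swap[of _ "{..<dim_col A}"])

lemma l1_norm_mult_le:
  assumes A: "A \<in> carrier_mat a b" and B: "B \<in> carrier_mat b c"
  shows "l1_norm (A * B) \<le> l1_norm A * l1_norm B"
proof -
  have row_le: "(\<Sum>k<c. \<bar>B $$ (j, k)\<bar>) \<le> l1_norm B" if "j < b" for j
  proof -
    have "(\<Sum>k<c. \<bar>B $$ (j, k)\<bar>) \<le> (\<Sum>i<b. \<Sum>k<c. \<bar>B $$ (i, k)\<bar>)"
      by (rule member_le_sum[where f = "\<lambda>i. \<Sum>k<c. \<bar>B $$ (i, k)\<bar>"])
        (use that in \<open>auto intro: sum_nonneg\<close>)
    then show ?thesis using B by (simp add: l1_norm_def)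
  qed
  have "l1_norm (A * B) = (\<Sum>i<a. \<Sum>k<c. \<bar>\<Sum>j<b. A $$ (i, j) * B $$ (j, k)\<bar>)"
    unfolding l1_norm_def using A B
    by (intro sum.cong refl)
      (auto simp: scalar_prod_def lessThan_atLeast0 intro!: arg_cong[where f = abs] sum.cong)
  also have "\<dots> \<le> (\<Sum>i<a. \<Sum>k<c. \<Sum>j<b. \<bar>A $$ (i, j)\<bar> * \<bar>B $$ (j, k)\<bar>)"
    by (intro sum_mono order.trans[OF sum_abs]) (simp add: abs_mult)
  also have "\<dots> = (\<Sum>i<a. \<Sum>j<b. \<bar>A $$ (i, j)\<bar> * (\<Sum>k<c. \<bar>B $$ (j, k)\<bar>))"
    unfolding sum_distrib_left by (rule sum.cong[OF refl], rule sum.swap)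
  also have "\<dots> \<le> (\<Sum>i<a. \<Sum>j<b. \<bar>A $$ (i, j)\<bar> * l1_norm B)"
    by (intro sum_mono mult_left_mono row_le) auto
  also have "\<dots> = l1_norm A * l1_norm B"
    unfolding l1_norm_def using A by (simp add: sum_distrib_right)
  finally show ?thesis .
qed

lemma l1_norm_le_frob_norm:
  assumes M: "M \<in> carrier_mat n n"
  shows "l1_norm M \<le> real n * real n * frob_norm M"
proof -
  have entry_le: "\<bar>M $$ (i, j)\<bar> \<le> frob_norm M" if i: "i < n" and j: "j < n" for i j
  proof -
    have "(M $$ (i, j))\<^sup>2 \<le> (\<Sum>j'<n. (M $$ (i, j'))\<^sup>2)"
      by (rule member_le_sum[where f = "\<lambda>j'. (M $$ (i, j'))\<^sup>2"]) (use j in auto)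
    also have "\<dots> \<le> (\<Sum>i'<n. \<Sum>j'<n. (M $$ (i', j'))\<^sup>2)"
      by (rule member_le_sum[where f = "\<lambda>i'. \<Sum>j'<n. (M $$ (i', j'))\<^sup>2"])
        (use i in \<open>auto intro: sum_nonneg\<close>)
    finally have "sqrt ((M $$ (i, j))\<^sup>2) \<le> sqrt (\<Sum>i'<n. \<Sum>j'<n. (M $$ (i', j'))\<^sup>2)"
      by (rule real_sqrt_le_mono)
    then show ?thesis unfolding frob_norm_def using M by simp
  qed
  have "l1_norm M = (\<Sum>i<n. \<Sum>j<n. \<bar>M $$ (i, j)\<bar>)" unfolding l1_norm_def using M by simp
  also have "\<dots> \<le> (\<Sum>i<n. \<Sum>j<n. frob_norm M)" by (intro sum_mono entry_le) auto
  finally show ?thesis by simp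
qed

lemma frob_norm_nonneg: "frob_norm M \<ge> 0"
  unfolding frob_norm_def by (intro real_sqrt_ge_zero sum_nonneg) auto

lemma mtrace_minus:
  assumes "A \<in> carrier_mat n n" "B \<in> carrier_mat n n"
  shows "mtrace (A - B) = mtrace A - mtrace B"
  unfolding mtrace_def using assms by (simp add: sum_subtractf)

lemma abs_mtrace_le_l1_norm:
  assumes "A \<in> carrier_mat n n"
  shows "\<bar>mtrace A\<bar> \<le> l1_norm A"
proof -
  have "\<bar>mtrace A\<bar> \<le> (\<Sum>i<n. \<bar>A $$ (i, i)\<bar>)"
    unfolding mtrace_def using assms by (simp add: sum_abs)
  also have "\<dots> \<le> (\<Sum>i<n. \<Sum>j<n. \<bar>A $$ (i, j)\<bar>)"
    by (intro sum_mono member_le_sum[where f = "\<lambda>j. \<bar>A $$ (_, j)\<bar>", simplified]) auto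
  finally show ?thesis unfolding l1_norm_def using assms by simp
qed

lemma abs_mtrace_diff_le:
  assumes "A \<in> carrier_mat n n" "B \<in> carrier_mat n n"
  shows "\<bar>mtrace A - mtrace B\<bar> \<le> l1_norm (A - B)"
  using abs_mtrace_le_l1_norm[of "A - B" n] mtrace_minus[OF assms] assms(2)
  by (simp add: minus_carrier_mat)

section \<open>Positive semidefinite matrices\<close>

lemma scalar_prod_self_eq_0:
  fixes v :: "real vec"
  assumes v: "v \<in> carrier_vec n" and z: "v \<bullet> v = 0"
  shows "v = 0\<^sub>v n"
proof -
  have "(\<Sum>i\<in>{0..<n}. v $ i * v $ i) = 0" using z v unfolding scalar_prod_def by auto
  then have "\<forall>i\<in>{0..<n}. v $ i * v $ i = 0"
    by (subst sum_nonneg_eq_0_iff[symmetric]) auto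
  then show ?thesis using v by (intro eq_vecI) auto
qed

lemma sym_mat_scalar_prod_comm:
  fixes M :: "real mat"
  assumes M: "M \<in> carrier_mat n n" and s: "sym_mat M"
    and u: "u \<in> carrier_vec n" and v: "v \<in> carrier_vec n"
  shows "u \<bullet> (M *\<^sub>v v) = v \<bullet> (M *\<^sub>v u)"
  using transpose_vec_mult_scalar[OF M v u] comm_scalar_prod[of "M *\<^sub>v u" n v] s M u v
  unfolding sym_mat_def by simp

lemma sym_mat_quadratic_form_add:
  fixes M :: "real mat"
  assumes M: "M \<in> carrier_mat n n" and s: "sym_mat M"
    and u: "u \<in> carrier_vec n" and v: "v \<in> carrier_vec n"
  shows "(v + c \<cdot>\<^sub>v u) \<bullet> (M *\<^sub>v (v + c \<cdot>\<^sub>v u))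
     = v \<bullet> (M *\<^sub>v v) + 2 * c * (u \<bullet> (M *\<^sub>v v)) + c * c * (u \<bullet> (M *\<^sub>v u))"
proof -
  have "M *\<^sub>v (v + c \<cdot>\<^sub>v u) = M *\<^sub>v v + c \<cdot>\<^sub>v (M *\<^sub>v u)"
    using M u v by (simp add: mult_add_distrib_mat_vec mult_mat_vec)
  moreover have "(v + c \<cdot>\<^sub>v u) \<bullet> (M *\<^sub>v v + c \<cdot>\<^sub>v (M *\<^sub>v u))
     = v \<bullet> (M *\<^sub>v v) + c * (v \<bullet> (M *\<^sub>v u)) + c * (u \<bullet> (M *\<^sub>v v)) + c * c * (u \<bullet> (M *\<^sub>v u))"
    using M u v
    by (simp add: add_scalar_prod_distrib[of _ n] scalar_prod_add_distrib[of _ n] algebra_simps)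
  ultimately show ?thesis using sym_mat_scalar_prod_comm[OF M s u v] by simp
qed

lemma psd_matD:
  assumes "psd_mat n M"
  shows "M \<in> carrier_mat n n" "sym_mat M" "transpose_mat M = M"
    and "\<And>v. v \<in> carrier_vec n \<Longrightarrow> v \<bullet> (M *\<^sub>v v) \<ge> 0"
  using assms unfolding psd_mat_def sym_mat_def by auto

lemma pd_imp_psd_mat:
  assumes "pd_mat n M"
  shows "psd_mat n M"
proof -
  have M: "M \<in> carrier_mat n n" "sym_mat M"
    and pos: "\<And>v. v \<in> carrier_vec n \<Longrightarrow> v \<noteq> 0\<^sub>v n \<Longrightarrow> v \<bullet> (M *\<^sub>v v) > 0"
    using assms unfolding pd_mat_def by auto
  have "v \<bullet> (M *\<^sub>v v) \<ge> 0" if v: "v \<in> carrier_vec n" for v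
    using pos[OF v] M(1) by (cases "v = 0\<^sub>v n") (auto simp: less_imp_le)
  then show ?thesis unfolding psd_mat_def using M by blast
qed

lemma psd_mat_mult_vec_eq_0:
  assumes P: "psd_mat n M" and v: "v \<in> carrier_vec n" and z: "v \<bullet> (M *\<^sub>v v) = 0"
  shows "M *\<^sub>v v = 0\<^sub>v n"
proof -
  note M = psd_matD[OF P]
  have orth: "u \<bullet> (M *\<^sub>v v) = 0" if u: "u \<in> carrier_vec n" for u
  proof -
    define a where "a = u \<bullet> (M *\<^sub>v u)"
    define c where "c = u \<bullet> (M *\<^sub>v v)"
    define s where "s = - c / (a + 1)"
    have a0: "a \<ge> 0" using M(4)[OF u] a_def by simp
    \<comment> \<open>at v + s u the form equals -c^2 (a + 2) / (a + 1)^2, which must be nonnegative\<close>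
    have "0 \<le> (v + s \<cdot>\<^sub>v u) \<bullet> (M *\<^sub>v (v + s \<cdot>\<^sub>v u))" using M(4) u v by simp
    also have "\<dots> = 2 * s * c + s * s * a"
      using sym_mat_quadratic_form_add[OF M(1,2) u v, of s] z a_def c_def by simp
    finally have "0 \<le> (a + 1) * (a + 1) * (2 * s * c + s * s * a)" using a0 by simp
    also have "\<dots> = 2 * c * (a + 1) * (s * (a + 1)) + a * (s * (a + 1)) * (s * (a + 1))"
      by (simp add: algebra_simps)
    also have "s * (a + 1) = - c" unfolding s_def using a0 by simp
    finally have "0 \<le> - (c * c) * (a + 2)" by (simp add: algebra_simps)
    then have "c * c \<le> 0" using a0 by (simp add: mult_le_0_iff)
    then show ?thesis unfolding c_def by (auto simp: mult_le_0_iff)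
  qed
  have "(M *\<^sub>v v) \<bullet> (M *\<^sub>v v) = 0" using orth[of "M *\<^sub>v v"] M(1) v by simp
  then show ?thesis using scalar_prod_self_eq_0[of "M *\<^sub>v v" n] M(1) v by simp
qed

lemma quadratic_form_unit_vec:
  fixes M :: "real mat"
  assumes M: "M \<in> carrier_mat n n" and i: "i < n" and j: "j < n"
  shows "unit_vec n j \<bullet> (M *\<^sub>v unit_vec n i) = M $$ (j, i)"
  using M i j scalar_prod_left_unit[of "M *\<^sub>v unit_vec n i" n j] by simp

lemma psd_mat_abs_entry_le:
  assumes P: "psd_mat n M" and i: "i < n" and j: "j < n"
  shows "\<bar>M $$ (i, j)\<bar> \<le> (M $$ (i, i) + M $$ (j, j)) / 2"
proof -
  note M = psd_matD[OF P]
  have nonneg: "M $$ (i, i) + 2 * c * M $$ (j, i) + c * c * M $$ (j, j) \<ge> 0" for c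
  proof -
    have "0 \<le> (unit_vec n i + c \<cdot>\<^sub>v unit_vec n j) \<bullet> (M *\<^sub>v (unit_vec n i + c \<cdot>\<^sub>v unit_vec n j))"
      by (rule M(4)) simp
    also have "\<dots> = M $$ (i, i) + 2 * c * M $$ (j, i) + c * c * M $$ (j, j)"
      by (subst sym_mat_quadratic_form_add[OF M(1,2)]) (use M(1) i j in \<open>auto simp: quadratic_form_unit_vec\<close>)
    finally show ?thesis .
  qed
  have "M $$ (j, i) = M $$ (i, j)"
    using M(1,3) i j by (metis carrier_matD index_transpose_mat(1))
  with nonneg[of 1] nonneg[of "-1"] show ?thesis by auto
qed

lemma psd_mat_diag_nonneg:
  assumes "psd_mat n M" "i < n"
  shows "M $$ (i, i) \<ge> 0"
  using psd_matD(4)[OF assms(1), of "unit_vec n i"] quadratic_form_unit_vec[OF psd_matD(1)] assms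
  by simp

lemma psd_mat_mtrace_nonneg:
  assumes "psd_mat n M"
  shows "mtrace M \<ge> 0"
  unfolding mtrace_def using psd_matD(1)[OF assms] psd_mat_diag_nonneg[OF assms]
  by (auto intro: sum_nonneg)

lemma psd_mat_l1_norm_le_mtrace:
  assumes P: "psd_mat n M"
  shows "l1_norm M \<le> real n * mtrace M"
proof -
  have M: "M \<in> carrier_mat n n" using psd_matD(1)[OF P] .
  have "l1_norm M = (\<Sum>i<n. \<Sum>j<n. \<bar>M $$ (i, j)\<bar>)" unfolding l1_norm_def using M by simp
  also have "\<dots> \<le> (\<Sum>i<n. \<Sum>j<n. (M $$ (i, i) + M $$ (j, j)) / 2)"
    by (intro sum_mono psd_mat_abs_entry_le[OF P]) auto
  also have "\<dots> = (\<Sum>i<n. \<Sum>j<n. M $$ (i, i) / 2) + (\<Sum>i<n. \<Sum>j<n. M $$ (j, j) / 2)"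
    by (simp add: add_divide_distrib sum.distrib)
  also have "\<dots> = real n * mtrace M" unfolding mtrace_def using M
    by (simp add: sum_divide_distrib[symmetric] sum_distrib_left[symmetric] algebra_simps)
  finally show ?thesis .
qed

lemma zero_mat_mult_vec: "v \<in> carrier_vec n \<Longrightarrow> 0\<^sub>m m n *\<^sub>v v = 0\<^sub>v m"
  by (intro eq_vecI) (auto simp: scalar_prod_def row_def)

lemma smult_mat_mult_vec:
  assumes "M \<in> carrier_mat n n" "v \<in> carrier_vec n"
  shows "(c \<cdot>\<^sub>m M) *\<^sub>v v = c \<cdot>\<^sub>v (M *\<^sub>v v)"
  using assms by (intro eq_vecI) (auto simp: row_def scalar_prod_def sum_distrib_left ac_simps)

lemma psd_mat_zero: "psd_mat n (0\<^sub>m n n)"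
  unfolding psd_mat_def sym_mat_def by (auto simp: zero_mat_mult_vec)

lemma psd_mat_add: "psd_mat n A \<Longrightarrow> psd_mat n B \<Longrightarrow> psd_mat n (A + B)"
  unfolding psd_mat_def sym_mat_def
  by (auto simp: transpose_add add_mult_distrib_mat_vec scalar_prod_add_distrib[of _ n])

lemma transpose_smult_mat: "transpose_mat (c \<cdot>\<^sub>m A) = c \<cdot>\<^sub>m transpose_mat A"
  by (intro eq_matI) auto

lemma psd_mat_smult: "psd_mat n A \<Longrightarrow> c \<ge> 0 \<Longrightarrow> psd_mat n (c \<cdot>\<^sub>m A)"
  unfolding psd_mat_def sym_mat_def by (auto simp: smult_mat_mult_vec transpose_smult_mat)

lemma psd_mat_congruence:
  assumes P: "psd_mat m P" and A: "A \<in> carrier_mat n m"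
  shows "psd_mat n (A * P * transpose_mat A)"
proof -
  note Pm = psd_matD[OF P]
  have "transpose_mat (A * P * transpose_mat A) = A * P * transpose_mat A"
    using A Pm(1,3) transpose_mult[of A n m P m] transpose_mult[of "A * P" n m "transpose_mat A" n]
    by simp
  moreover have "v \<bullet> ((A * P * transpose_mat A) *\<^sub>v v) \<ge> 0" if v: "v \<in> carrier_vec n" for v
  proof -
    let ?w = "transpose_mat A *\<^sub>v v"
    have w: "?w \<in> carrier_vec m" using A v by simp
    have "(A * P * transpose_mat A) *\<^sub>v v = (A * P) *\<^sub>v ?w"
      by (rule assoc_mult_mat_vec) (use A Pm(1) v in auto)
    also have "\<dots> = A *\<^sub>v (P *\<^sub>v ?w)"
      by (rule assoc_mult_mat_vec) (use A Pm(1) w in auto)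
    finally have "v \<bullet> ((A * P * transpose_mat A) *\<^sub>v v) = v \<bullet> (A *\<^sub>v (P *\<^sub>v ?w))" by simp
    also have "\<dots> = ?w \<bullet> (P *\<^sub>v ?w)"
      using transpose_vec_mult_scalar[OF A, of "P *\<^sub>v ?w" v] Pm(1) w v by simp
    finally show ?thesis using Pm(4)[OF w] by simp
  qed
  ultimately show ?thesis unfolding psd_mat_def sym_mat_def using A Pm(1) by auto
qed

lemma minv_eqI:
  fixes M X :: "real mat"
  assumes M: "M \<in> carrier_mat n n" and X: "X \<in> carrier_mat n n"
    and MX: "M * X = 1\<^sub>m n" and XM: "X * M = 1\<^sub>m n"
  shows "minv M = X"
proof -
  have "\<exists>B. B \<in> carrier_mat n n \<and> M * B = 1\<^sub>m n \<and> B * M = 1\<^sub>m n" using X MX XM by auto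
  from someI_ex[OF this] have B: "minv M \<in> carrier_mat n n" "minv M * M = 1\<^sub>m n"
    unfolding minv_def carrier_matD(1)[OF M] by auto
  have "minv M = minv M * (M * X)" using B(1) MX by simp
  also have "\<dots> = (minv M * M) * X" using assoc_mult_mat[OF B(1) M X] by simp
  also have "\<dots> = X" using B(2) X by simp
  finally show ?thesis .
qed

lemma minv_mat:
  fixes M :: "real mat"
  assumes M: "M \<in> carrier_mat n n"
    and inj: "\<And>v. v \<in> carrier_vec n \<Longrightarrow> M *\<^sub>v v = 0\<^sub>v n \<Longrightarrow> v = 0\<^sub>v n"
  shows "minv M \<in> carrier_mat n n" "M * minv M = 1\<^sub>m n" "minv M * M = 1\<^sub>m n"
proof -
  have "det M \<noteq> 0" using det_0_iff_vec_prod_zero_field[OF M] inj by auto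
  from det_non_zero_imp_unit[OF M this, of "()"]
  obtain X where "X \<in> carrier_mat n n" "M * X = 1\<^sub>m n" "X * M = 1\<^sub>m n"
    unfolding Units_def ring_mat_def by auto
  with minv_eqI[OF M this] show "minv M \<in> carrier_mat n n" "M * minv M = 1\<^sub>m n" "minv M * M = 1\<^sub>m n"
    by auto
qed

lemma pd_mat_minv_psd:
  assumes V: "pd_mat m V"
  shows "psd_mat m (minv V)"
proof -
  note Vm = psd_matD[OF pd_imp_psd_mat[OF V]]
  have inj: "v = 0\<^sub>v m" if v: "v \<in> carrier_vec m" and z: "V *\<^sub>v v = 0\<^sub>v m" for v
  proof (rule ccontr)
    assume "v \<noteq> 0\<^sub>v m"
    then have "v \<bullet> (V *\<^sub>v v) > 0" using V v unfolding pd_mat_def by auto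
    then show False using z v by simp
  qed
  define X where "X = minv V"
  have X: "X \<in> carrier_mat m m" "V * X = 1\<^sub>m m" "X * V = 1\<^sub>m m"
    using minv_mat[OF Vm(1) inj] unfolding X_def by auto
  have "V * transpose_mat X = 1\<^sub>m m" "transpose_mat X * V = 1\<^sub>m m"
    using arg_cong[OF X(3), of transpose_mat] arg_cong[OF X(2), of transpose_mat] X(1) Vm(1,3)
    by (simp_all add: transpose_mult[of _ m m])
  then have X_sym: "transpose_mat X = X"
    using minv_eqI[OF Vm(1), of "transpose_mat X"] X(1) unfolding X_def by simp
  have "v \<bullet> (X *\<^sub>v v) \<ge> 0" if v: "v \<in> carrier_vec m" for v
  proof -
    define w where "w = X *\<^sub>v v"
    have w: "w \<in> carrier_vec m" using X v unfolding w_def by simp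
    have "V *\<^sub>v w = v" using X(1,2) Vm(1) v unfolding w_def by (simp add: assoc_mult_mat_vec[symmetric])
    then have "v \<bullet> (X *\<^sub>v v) = w \<bullet> (V *\<^sub>v w)"
      using comm_scalar_prod[of w m "V *\<^sub>v w"] Vm(1) w v unfolding w_def[symmetric] by simp
    then show ?thesis using Vm(4)[OF w] by simp
  qed
  then show ?thesis unfolding psd_mat_def sym_mat_def X_def[symmetric] using X(1) X_sym by auto
qed

lemma info_mat_psd:
  assumes C: "C \<in> carrier_mat m n" and V: "pd_mat m V"
  shows "psd_mat n (info_mat C V)"
  using psd_mat_congruence[OF pd_mat_minv_psd[OF V], of "transpose_mat C" n] C
  unfolding info_mat_def by simp

section \<open>The measurement update\<close>

lemma add_minus_add_right_mat:
  fixes A B C :: "real mat"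
  assumes "A \<in> carrier_mat n n" "B \<in> carrier_mat n n" "C \<in> carrier_mat n n"
  shows "(A + C) - (B + C) = A - B"
  using assms by (intro eq_matI) auto

lemma eq_mat_if_minus_eq_0:
  fixes A B :: "real mat"
  assumes A: "A \<in> carrier_mat n m" and B: "B \<in> carrier_mat n m" and AB: "A - B = 0\<^sub>m n m"
  shows "A = B"
proof (rule eq_matI)
  fix i j
  assume "i < dim_row B" "j < dim_col B"
  then have "(A - B) $$ (i, j) = 0" using AB B by simp
  then show "A $$ (i, j) = B $$ (i, j)" using \<open>i < dim_row B\<close> \<open>j < dim_col B\<close> by simp
qed (use A B in auto)

lemma resolvent_identity:
  fixes T P Q R X :: "real mat"
  assumes carrier: "T \<in> carrier_mat n n" "P \<in> carrier_mat n n" "Q \<in> carrier_mat n n"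
      "R \<in> carrier_mat n n" "X \<in> carrier_mat n n"
    and T: "T * (1\<^sub>m n + P * R) = 1\<^sub>m n" and X: "(1\<^sub>m n + R * Q) * X = 1\<^sub>m n"
  shows "T * P - Q * X = T * (P - Q) * X"
proof -
  note ring_simps = mult_add_distrib_mat[of _ n n _ n] add_mult_distrib_mat[of _ n n _ _ n]
    assoc_mult_mat[of _ n n _ n _ n]
  define C where "C = T * P * R * Q * X"
  have "T * P = T * P * ((1\<^sub>m n + R * Q) * X)" using X carrier by simp
  also have "\<dots> = T * P * X + C" unfolding C_def using carrier by (simp add: ring_simps)
  finally have TP: "T * P = T * P * X + C" .
  have "Q * X = (T * (1\<^sub>m n + P * R)) * (Q * X)" using T carrier by simp
  also have "\<dots> = T * Q * X + C" unfolding C_def using carrier by (simp add: ring_simps)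
  finally have QX: "Q * X = T * Q * X + C" .
  have "T * P - Q * X = (T * P * X + C) - (T * Q * X + C)"
    using TP QX by (rule arg_cong2[where f = "(-)"])
  also have "\<dots> = T * P * X - T * Q * X"
    using carrier unfolding C_def by (intro add_minus_add_right_mat) auto
  also have "\<dots> = T * (P - Q) * X"
    using carrier by (simp add: mult_minus_distrib_mat[of _ n n _ n] minus_mult_distrib_mat[of _ n n _ _ n])
  finally show ?thesis .
qed

definition update_inv :: "real mat \<Rightarrow> real mat \<Rightarrow> real mat" where
  "update_inv R P = minv (1\<^sub>m (dim_row P) + R * P)"

lemma Phi_eq_mult_update_inv: "Phi R P = P * update_inv R P"
  unfolding Phi_def update_inv_def ..

lemma update_mat_mult_vec:
  fixes R P :: "real mat"
  assumes "R \<in> carrier_mat n n" "P \<in> carrier_mat n n" "w \<in> carrier_vec n"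
  shows "(1\<^sub>m n + R * P) *\<^sub>v w = w + R *\<^sub>v (P *\<^sub>v w)"
  using assms by (simp add: add_mult_distrib_mat_vec[of _ n n])

lemma update_mat_mult_vec_eq_0:
  assumes R: "psd_mat n R" and P: "psd_mat n P" and w: "w \<in> carrier_vec n"
    and z: "(1\<^sub>m n + R * P) *\<^sub>v w = 0\<^sub>v n"
  shows "w = 0\<^sub>v n"
proof -
  note Rm = psd_matD[OF R] and Pm = psd_matD[OF P]
  define p where "p = P *\<^sub>v w"
  define x where "x = R *\<^sub>v p"
  have pc: "p \<in> carrier_vec n" "x \<in> carrier_vec n" using Rm(1) Pm(1) w unfolding p_def x_def by simp_all
  have wx: "w + x = 0\<^sub>v n" using z update_mat_mult_vec[OF Rm(1) Pm(1) w] unfolding x_def p_def by simp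
  \<comment> \<open>0 = (w + R P w) \<bullet> P w = w \<bullet> P w + P w \<bullet> R P w is a sum of two nonnegative terms\<close>
  have "w \<bullet> p + x \<bullet> p = (w + x) \<bullet> p" using w pc by (simp add: add_scalar_prod_distrib)
  then have sum0: "w \<bullet> p + p \<bullet> x = 0" unfolding wx using pc comm_scalar_prod[of x n p] by simp
  have "w \<bullet> p \<ge> 0" "p \<bullet> x \<ge> 0" using Pm(4)[OF w] Rm(4)[OF pc(1)] unfolding p_def x_def by simp_all
  then have "w \<bullet> (P *\<^sub>v w) = 0" using sum0 p_def by simp
  then have "p = 0\<^sub>v n" using psd_mat_mult_vec_eq_0[OF P w] p_def by simp
  then have "x = 0\<^sub>v n" unfolding x_def using Rm(1) by (intro eq_vecI) auto
  then show ?thesis using wx w by simp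
qed

lemma update_inv_mat:
  assumes R: "psd_mat n R" and P: "psd_mat n P"
  shows "update_inv R P \<in> carrier_mat n n" "(1\<^sub>m n + R * P) * update_inv R P = 1\<^sub>m n"
proof -
  have E: "1\<^sub>m n + R * P \<in> carrier_mat n n" using psd_matD(1)[OF R] psd_matD(1)[OF P] by simp
  have "update_inv R P = minv (1\<^sub>m n + R * P)"
    unfolding update_inv_def using psd_matD(1)[OF P] by simp
  with minv_mat[OF E update_mat_mult_vec_eq_0[OF R P]]
  show "update_inv R P \<in> carrier_mat n n" "(1\<^sub>m n + R * P) * update_inv R P = 1\<^sub>m n"
    by auto
qed

lemma transpose_update_inv_mult:
  assumes R: "psd_mat n R" and P: "psd_mat n P"
  shows "transpose_mat (update_inv R P) * (1\<^sub>m n + P * R) = 1\<^sub>m n"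
proof -
  note Rm = psd_matD[OF R] and Pm = psd_matD[OF P] and X = update_inv_mat[OF R P]
  have "transpose_mat (1\<^sub>m n + R * P) = 1\<^sub>m n + P * R"
    using Rm(1,3) Pm(1,3) by (simp add: transpose_add[of _ n n] transpose_mult[of _ n n])
  moreover have "transpose_mat (update_inv R P) * transpose_mat (1\<^sub>m n + R * P) = 1\<^sub>m n"
    using arg_cong[OF X(2), of transpose_mat] X(1) Rm(1) Pm(1)
    by (simp add: transpose_mult[of _ n n])
  ultimately show ?thesis by simp
qed

lemma transpose_update_inv_mult_self:
  assumes R: "psd_mat n R" and P: "psd_mat n P"
  shows "transpose_mat (update_inv R P) * P = P * update_inv R P"
proof -
  note Rm = psd_matD[OF R] and Pm = psd_matD[OF P] and X = update_inv_mat[OF R P]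
  let ?T = "transpose_mat (update_inv R P)"
  have T: "?T \<in> carrier_mat n n" using X(1) by simp
  have "?T * P - P * update_inv R P = ?T * (P - P) * update_inv R P"
    by (rule resolvent_identity[OF T Pm(1) Pm(1) Rm(1) X(1) transpose_update_inv_mult[OF R P] X(2)])
  also have "P - P = 0\<^sub>m n n" using Pm(1) by simp
  also have "?T * 0\<^sub>m n n * update_inv R P = 0\<^sub>m n n" using T X(1) by (simp add: right_mult_zero_mat)
  finally have "?T * P - P * update_inv R P = 0\<^sub>m n n" .
  from eq_mat_if_minus_eq_0[OF _ _ this] show ?thesis using T Pm(1) X(1) by simp
qed

lemma Phi_mat:
  assumes R: "psd_mat n R" and P: "psd_mat n P"
  shows "Phi R P \<in> carrier_mat n n"
  using update_inv_mat(1)[OF R P] psd_matD(1)[OF P] unfolding Phi_eq_mult_update_inv by simp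

lemma Phi_quadratic_forms_nonneg:
  assumes R: "psd_mat n R" and P: "psd_mat n P" and v: "v \<in> carrier_vec n"
  shows "v \<bullet> (Phi R P *\<^sub>v v) \<ge> 0" "v \<bullet> ((P - Phi R P) *\<^sub>v v) \<ge> 0"
proof -
  note Rm = psd_matD[OF R] and Pm = psd_matD[OF P] and X = update_inv_mat[OF R P]
  \<comment> \<open>split v = w + R P w, where (1 + R P) w = v\<close>
  define w where "w = update_inv R P *\<^sub>v v"
  define p where "p = P *\<^sub>v w"
  define x where "x = R *\<^sub>v p"
  have wc: "w \<in> carrier_vec n" "p \<in> carrier_vec n" "x \<in> carrier_vec n"
    using X(1) Rm(1) Pm(1) v unfolding w_def p_def x_def by simp_all
  have "(1\<^sub>m n + R * P) *\<^sub>v w = ((1\<^sub>m n + R * P) * update_inv R P) *\<^sub>v v"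
    unfolding w_def by (rule assoc_mult_mat_vec[symmetric]) (use X(1) Rm(1) Pm(1) v in auto)
  then have "(1\<^sub>m n + R * P) *\<^sub>v w = v" using X(2) v by simp
  then have v_eq: "v = w + x"
    using update_mat_mult_vec[OF Rm(1) Pm(1) wc(1)] unfolding x_def p_def by simp
  have Phi_v: "Phi R P *\<^sub>v v = p"
    unfolding Phi_eq_mult_update_inv p_def w_def using X(1) Pm(1) v by simp
  have xp: "x \<bullet> p \<ge> 0" using Rm(4)[OF wc(2)] comm_scalar_prod[of x n p] wc unfolding x_def by simp
  have "v \<bullet> p = w \<bullet> p + x \<bullet> p" unfolding v_eq using wc by (simp add: add_scalar_prod_distrib)
  then show "v \<bullet> (Phi R P *\<^sub>v v) \<ge> 0" using Phi_v Pm(4)[OF wc(1)] xp unfolding p_def by simp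
  have Pv: "P *\<^sub>v v = p + P *\<^sub>v x" unfolding v_eq p_def using Pm(1) wc by (simp add: mult_add_distrib_mat_vec)
  have "(P - Phi R P) *\<^sub>v v = P *\<^sub>v v - Phi R P *\<^sub>v v"
    by (rule minus_mult_distrib_mat_vec) (use Pm(1) Phi_mat[OF R P] v in auto)
  also have "\<dots> = P *\<^sub>v x" unfolding Pv Phi_v using wc Pm(1) by (intro eq_vecI) auto
  finally have "v \<bullet> ((P - Phi R P) *\<^sub>v v) = v \<bullet> (P *\<^sub>v x)" by simp
  also have "\<dots> = x \<bullet> (P *\<^sub>v v)" by (rule sym_mat_scalar_prod_comm[OF Pm(1,2) v wc(3)])
  also have "\<dots> = x \<bullet> p + x \<bullet> (P *\<^sub>v x)" unfolding Pv using Pm(1) wc by (simp add: scalar_prod_add_distrib[of _ n])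
  finally show "v \<bullet> ((P - Phi R P) *\<^sub>v v) \<ge> 0" using xp Pm(4)[OF wc(3)] by simp
qed

lemma transpose_Phi:
  assumes R: "psd_mat n R" and P: "psd_mat n P"
  shows "transpose_mat (Phi R P) = Phi R P"
  using transpose_mult[of P n n "update_inv R P" n] transpose_update_inv_mult_self[OF R P]
    update_inv_mat(1)[OF R P] psd_matD(1,3)[OF P]
  unfolding Phi_eq_mult_update_inv by simp

lemma Phi_psd:
  assumes R: "psd_mat n R" and P: "psd_mat n P"
  shows "psd_mat n (Phi R P)"
  unfolding psd_mat_def sym_mat_def
  using Phi_mat[OF R P] transpose_Phi[OF R P] Phi_quadratic_forms_nonneg(1)[OF R P] by blast

lemma Phi_le:
  assumes R: "psd_mat n R" and P: "psd_mat n P"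
  shows "psd_mat n (P - Phi R P)"
  unfolding psd_mat_def sym_mat_def
  using Phi_mat[OF R P] transpose_Phi[OF R P] Phi_quadratic_forms_nonneg(2)[OF R P] psd_matD(1,3)[OF P]
  by (auto simp: transpose_minus[of _ n n])

lemma l1_norm_Phi_le:
  assumes R: "psd_mat n R" and P: "psd_mat n P"
  shows "l1_norm (Phi R P) \<le> real n * l1_norm P"
proof -
  have "mtrace (Phi R P) \<le> mtrace P"
    using psd_mat_mtrace_nonneg[OF Phi_le[OF R P]] mtrace_minus[OF psd_matD(1)[OF P] Phi_mat[OF R P]]
    by simp
  also have "\<dots> \<le> l1_norm P" using abs_mtrace_le_l1_norm[OF psd_matD(1)[OF P]] by simp
  finally show ?thesis
    using psd_mat_l1_norm_le_mtrace[OF Phi_psd[OF R P]] by (simp add: order.trans mult_left_mono)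
qed

lemma update_inv_eq:
  assumes R: "psd_mat n R" and P: "psd_mat n P"
  shows "update_inv R P = 1\<^sub>m n - R * Phi R P"
proof -
  note X = update_inv_mat[OF R P] and Rc = psd_matD(1)[OF R] and Pc = psd_matD(1)[OF P]
  have sum_eq: "update_inv R P + R * Phi R P = 1\<^sub>m n"
    using X(1,2) Rc Pc unfolding Phi_eq_mult_update_inv by (simp add: add_mult_distrib_mat[of _ n n _ _ n])
  show ?thesis
  proof (rule eq_matI)
    fix i j
    assume ij: "i < dim_row (1\<^sub>m n - R * Phi R P)" "j < dim_col (1\<^sub>m n - R * Phi R P)"
    have "(update_inv R P + R * Phi R P) $$ (i, j) = 1\<^sub>m n $$ (i, j)" using sum_eq by simp
    then show "update_inv R P $$ (i, j) = (1\<^sub>m n - R * Phi R P) $$ (i, j)"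
      using ij X(1) Rc Phi_mat[OF R P] by simp
  qed (use X(1) Rc Phi_mat[OF R P] in auto)
qed

lemma l1_norm_update_inv_le:
  assumes R: "psd_mat n R" and P: "psd_mat n P"
  shows "l1_norm (update_inv R P) \<le> real n + l1_norm R * (real n * l1_norm P)"
proof -
  have "l1_norm (update_inv R P) \<le> l1_norm (1\<^sub>m n) + l1_norm (R * Phi R P)"
    unfolding update_inv_eq[OF R P]
    by (rule l1_norm_minus_le) (use psd_matD(1)[OF R] Phi_mat[OF R P] in auto)
  also have "\<dots> \<le> real n + l1_norm R * l1_norm (Phi R P)"
    using l1_norm_mult_le[OF psd_matD(1)[OF R] Phi_mat[OF R P]] l1_norm_one by simp
  also have "\<dots> \<le> real n + l1_norm R * (real n * l1_norm P)"
    using l1_norm_Phi_le[OF R P] l1_norm_nonneg[of R] by (simp add: mult_left_mono)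
  finally show ?thesis .
qed

lemma Phi_diff:
  assumes R: "psd_mat n R" and P: "psd_mat n P" and Q: "psd_mat n Q"
  shows "Phi R P - Phi R Q = transpose_mat (update_inv R P) * (P - Q) * update_inv R Q"
proof -
  note XP = update_inv_mat[OF R P] and XQ = update_inv_mat[OF R Q]
  have "Phi R P - Phi R Q = transpose_mat (update_inv R P) * P - Q * update_inv R Q"
    unfolding Phi_eq_mult_update_inv transpose_update_inv_mult_self[OF R P] ..
  also have "\<dots> = transpose_mat (update_inv R P) * (P - Q) * update_inv R Q"
    by (rule resolvent_identity[OF _ psd_matD(1)[OF P] psd_matD(1)[OF Q] psd_matD(1)[OF R] XQ(1)
          transpose_update_inv_mult[OF R P] XQ(2)]) (use XP(1) in simp)
  finally show ?thesis .
qed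

definition Phi_lip_const :: "nat \<Rightarrow> real \<Rightarrow> real \<Rightarrow> real" where
  "Phi_lip_const n \<rho> \<beta> = (real n + \<rho> * (real n * \<beta>))\<^sup>2"

lemma l1_norm_Phi_diff_le:
  assumes R: "psd_mat n R" and P: "psd_mat n P" and Q: "psd_mat n Q"
    and lR: "l1_norm R \<le> \<rho>" and lP: "l1_norm P \<le> \<beta>" and lQ: "l1_norm Q \<le> \<beta>"
  shows "l1_norm (Phi R P - Phi R Q) \<le> Phi_lip_const n \<rho> \<beta> * l1_norm (P - Q)"
proof -
  define K where "K = real n + \<rho> * (real n * \<beta>)"
  have bound: "l1_norm (update_inv R M) \<le> K" if M: "psd_mat n M" "l1_norm M \<le> \<beta>" for M
    using order.trans[OF l1_norm_update_inv_le[OF R M(1)]] lR M(2) l1_norm_nonneg[of R] l1_norm_nonneg[of M]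
    unfolding K_def by (simp add: mult_mono)
  note XP = update_inv_mat(1)[OF R P] and XQ = update_inv_mat(1)[OF R Q]
  have PQ: "P - Q \<in> carrier_mat n n" using psd_matD(1)[OF Q] by (simp add: minus_carrier_mat)
  have "l1_norm (Phi R P - Phi R Q) \<le> l1_norm (transpose_mat (update_inv R P) * (P - Q)) * l1_norm (update_inv R Q)"
    unfolding Phi_diff[OF R P Q] by (rule l1_norm_mult_le[of _ n n]) (use XP XQ PQ in auto)
  also have "\<dots> \<le> (l1_norm (update_inv R P) * l1_norm (P - Q)) * l1_norm (update_inv R Q)"
    using l1_norm_mult_le[of "transpose_mat (update_inv R P)" n n "P - Q" n] XP PQ
    by (intro mult_right_mono) (auto simp: l1_norm_transpose l1_norm_nonneg)
  also have "\<dots> \<le> (K * l1_norm (P - Q)) * K"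
    using bound[OF P lP] bound[OF Q lQ] l1_norm_nonneg[of "update_inv R Q"] l1_norm_nonneg[of "P - Q"]
      l1_norm_nonneg[of "update_inv R P"]
    by (intro mult_mono) auto
  finally show ?thesis unfolding Phi_lip_const_def K_def by (simp add: power2_eq_square algebra_simps)
qed

section \<open>Prediction and the relaxed cost\<close>

lemma hpred_psd:
  assumes "psd_mat n P" "A \<in> carrier_mat n n" "psd_mat n W"
  shows "psd_mat n (hpred A W P)"
  unfolding hpred_def using assms by (intro psd_mat_add psd_mat_congruence)

lemma l1_norm_hpred_le:
  assumes A: "A \<in> carrier_mat n n" and P: "P \<in> carrier_mat n n" and W: "W \<in> carrier_mat n n"
  shows "l1_norm (hpred A W P) \<le> (l1_norm A)\<^sup>2 * l1_norm P + l1_norm W"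
proof -
  have "l1_norm (hpred A W P) \<le> l1_norm (A * P * transpose_mat A) + l1_norm W"
    unfolding hpred_def by (rule l1_norm_add_le) (use A P W in auto)
  also have "l1_norm (A * P * transpose_mat A) \<le> l1_norm (A * P) * l1_norm A"
    using l1_norm_mult_le[of "A * P" n n "transpose_mat A" n] A P by (simp add: l1_norm_transpose)
  also have "\<dots> \<le> l1_norm A * l1_norm P * l1_norm A"
    by (intro mult_right_mono l1_norm_mult_le l1_norm_nonneg) (use A P in auto)
  finally show ?thesis by (simp add: power2_eq_square algebra_simps)
qed

lemma hpred_diff:
  assumes A: "A \<in> carrier_mat n n" and P: "P \<in> carrier_mat n n" and Q: "Q \<in> carrier_mat n n"
    and W: "W \<in> carrier_mat n n"
  shows "hpred A W P - hpred A W Q = A * (P - Q) * transpose_mat A"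
proof -
  have "hpred A W P - hpred A W Q = A * P * transpose_mat A - A * Q * transpose_mat A"
    unfolding hpred_def by (rule add_minus_add_right_mat) (use A P Q W in auto)
  also have "\<dots> = A * (P - Q) * transpose_mat A"
    using A P Q by (simp add: mult_minus_distrib_mat[of _ n n _ n] minus_mult_distrib_mat[of _ n n _ _ n])
  finally show ?thesis .
qed

lemma l1_norm_hpred_diff_le:
  assumes A: "A \<in> carrier_mat n n" and P: "P \<in> carrier_mat n n" and Q: "Q \<in> carrier_mat n n"
    and W: "W \<in> carrier_mat n n"
  shows "l1_norm (hpred A W P - hpred A W Q) \<le> (l1_norm A)\<^sup>2 * l1_norm (P - Q)"
proof -
  have PQ: "P - Q \<in> carrier_mat n n" using Q by (simp add: minus_carrier_mat)
  have "l1_norm (A * (P - Q) * transpose_mat A) \<le> l1_norm (A * (P - Q)) * l1_norm A"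
    using l1_norm_mult_le[of "A * (P - Q)" n n "transpose_mat A" n] A PQ by (simp add: l1_norm_transpose)
  also have "\<dots> \<le> l1_norm A * l1_norm (P - Q) * l1_norm A"
    by (intro mult_right_mono l1_norm_mult_le l1_norm_nonneg) (use A PQ in auto)
  finally show ?thesis unfolding hpred_diff[OF A P Q W] by (simp add: power2_eq_square algebra_simps)
qed

lemma l1_norm_hpred_Phi_le:
  assumes R: "psd_mat n R" and P: "psd_mat n P" and A: "A \<in> carrier_mat n n"
    and W: "W \<in> carrier_mat n n" and lA: "l1_norm A \<le> \<alpha>" and lP: "l1_norm P \<le> \<beta>"
  shows "l1_norm (hpred A W (Phi R P)) \<le> \<alpha>\<^sup>2 * (real n * \<beta>) + l1_norm W"
proof -
  have "l1_norm (Phi R P) \<le> real n * \<beta>"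
    using l1_norm_Phi_le[OF R P] lP by (simp add: order.trans mult_left_mono)
  moreover have "(l1_norm A)\<^sup>2 \<le> \<alpha>\<^sup>2" using lA l1_norm_nonneg[of A] by (simp add: power_mono)
  ultimately have "(l1_norm A)\<^sup>2 * l1_norm (Phi R P) + l1_norm W \<le> \<alpha>\<^sup>2 * (real n * \<beta>) + l1_norm W"
    using l1_norm_nonneg[of "Phi R P"] by (intro add_right_mono mult_mono) auto
  with l1_norm_hpred_le[OF A Phi_mat[OF R P] W] show ?thesis by linarith
qed

lemma l1_norm_hpred_Phi_diff_le:
  assumes R: "psd_mat n R" and P: "psd_mat n P" and Q: "psd_mat n Q" and A: "A \<in> carrier_mat n n"
    and W: "W \<in> carrier_mat n n" and lR: "l1_norm R \<le> \<rho>" and lA: "l1_norm A \<le> \<alpha>"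
    and lP: "l1_norm P \<le> \<beta>" and lQ: "l1_norm Q \<le> \<beta>"
  shows "l1_norm (hpred A W (Phi R P) - hpred A W (Phi R Q))
    \<le> \<alpha>\<^sup>2 * (Phi_lip_const n \<rho> \<beta> * l1_norm (P - Q))"
proof -
  have "(l1_norm A)\<^sup>2 \<le> \<alpha>\<^sup>2" using lA l1_norm_nonneg[of A] by (simp add: power_mono)
  then have "(l1_norm A)\<^sup>2 * l1_norm (Phi R P - Phi R Q)
      \<le> \<alpha>\<^sup>2 * (Phi_lip_const n \<rho> \<beta> * l1_norm (P - Q))"
    using l1_norm_Phi_diff_le[OF R P Q lR lP lQ] l1_norm_nonneg[of "Phi R P - Phi R Q"]
    by (intro mult_mono) auto
  with l1_norm_hpred_diff_le[OF A Phi_mat[OF R P] Phi_mat[OF R Q] W] show ?thesis by linarith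
qed

lemma foldr_smult_add_psd_l1_norm_le:
  assumes "\<forall>i\<in>set xs. psd_mat n (M i) \<and> 0 \<le> c i \<and> c i \<le> 1"
  shows "psd_mat n (foldr (\<lambda>i S. c i \<cdot>\<^sub>m M i + S) xs (0\<^sub>m n n))
    \<and> l1_norm (foldr (\<lambda>i S. c i \<cdot>\<^sub>m M i + S) xs (0\<^sub>m n n)) \<le> (\<Sum>i\<leftarrow>xs. l1_norm (M i))"
  using assms
proof (induction xs)
  case Nil
  show ?case by (simp add: psd_mat_zero l1_norm_zero)
next
  case (Cons a xs)
  let ?S = "foldr (\<lambda>i S. c i \<cdot>\<^sub>m M i + S) xs (0\<^sub>m n n)"
  have S: "psd_mat n ?S" "l1_norm ?S \<le> (\<Sum>i\<leftarrow>xs. l1_norm (M i))" using Cons by auto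
  have a: "psd_mat n (M a)" "0 \<le> c a" "c a \<le> 1" using Cons.prems by auto
  have "l1_norm (c a \<cdot>\<^sub>m M a + ?S) \<le> l1_norm (c a \<cdot>\<^sub>m M a) + l1_norm ?S"
    by (rule l1_norm_add_le) (use psd_matD(1)[OF a(1)] psd_matD(1)[OF S(1)] in auto)
  also have "l1_norm (c a \<cdot>\<^sub>m M a) \<le> l1_norm (M a)"
    using a l1_norm_nonneg[of "M a"] by (simp add: l1_norm_smult mult_left_le_one_le)
  finally show ?case using S psd_mat_add[OF psd_mat_smult[OF a(1,2)] S(1)] by simp
qed

lemma wsum_psd_l1_norm_le:
  assumes "\<forall>i\<in>{1..N}. psd_mat n (R i k) \<and> 0 \<le> \<theta> k i \<and> \<theta> k i \<le> 1"
  shows "psd_mat n (wsum n N R \<theta> k) \<and> l1_norm (wsum n N R \<theta> k) \<le> (\<Sum>i=1..N. l1_norm (R i k))"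
  using foldr_smult_add_psd_l1_norm_le[of "[1..<Suc N]" n "\<lambda>i. R i k" "\<theta> k"] assms
  unfolding wsum_def
  by (simp del: upt_Suc add: sum_set_upt_conv_sum_list_nat[symmetric] atLeastLessThanSuc_atLeastAtMost)

text \<open>The radius \<beta> bounds the l1 norm of the prior covariance; one update and one prediction
  enlarge it to \<alpha>^2 n \<beta> + w, where \<alpha> bounds the dynamics and w is the l1 norm of W.\<close>

fun cost_lip_const :: "nat \<Rightarrow> real \<Rightarrow> real \<Rightarrow> real \<Rightarrow> nat \<Rightarrow> real \<Rightarrow> real" where
  "cost_lip_const n \<rho> \<alpha> w 0 \<beta> = Phi_lip_const n \<rho> \<beta>"
| "cost_lip_const n \<rho> \<alpha> w (Suc d) \<beta> =
     Phi_lip_const n \<rho> \<beta> * (1 + \<alpha>\<^sup>2 * cost_lip_const n \<rho> \<alpha> w d (\<alpha>\<^sup>2 * (real n * \<beta>) + w))"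

lemma cost_lip_const_nonneg: "cost_lip_const n \<rho> \<alpha> w d \<beta> \<ge> 0"
  by (induction d arbitrary: \<beta>) (simp_all add: Phi_lip_const_def)

lemma relaxed_cost_nonneg:
  assumes "\<forall>j\<in>{k..k + d}. psd_mat n (wsum n N R \<theta> j) \<and> A j \<in> carrier_mat n n"
    and "psd_mat n W" and "psd_mat n P"
  shows "relaxed_cost A W N R \<theta> d k P \<ge> 0"
  using assms
proof (induction d arbitrary: k P)
  case 0
  then show ?case
    using psd_mat_mtrace_nonneg[OF Phi_psd[OF _ "0.prems"(3)]] psd_matD(1)[OF "0.prems"(3)] by simp
next
  case (Suc d)
  let ?P' = "Phi (wsum n N R \<theta> k) P"
  have R: "psd_mat n (wsum n N R \<theta> k)" and A: "A k \<in> carrier_mat n n" using Suc.prems(1) by auto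
  have P': "psd_mat n ?P'" by (rule Phi_psd[OF R Suc.prems(3)])
  have "relaxed_cost A W N R \<theta> d (Suc k) (hpred (A k) W ?P') \<ge> 0"
    by (rule Suc.IH) (use Suc.prems hpred_psd[OF P' A Suc.prems(2)] in auto)
  then show ?case using psd_mat_mtrace_nonneg[OF P'] psd_matD(1)[OF Suc.prems(3)] by (simp add: Let_def)
qed

lemma relaxed_cost_lipschitz:
  assumes "\<forall>j\<in>{k..k + d}. psd_mat n (wsum n N R \<theta> j) \<and> l1_norm (wsum n N R \<theta> j) \<le> \<rho>
      \<and> A j \<in> carrier_mat n n \<and> l1_norm (A j) \<le> \<alpha>"
    and "psd_mat n W" and "psd_mat n P" and "psd_mat n Q"
    and "l1_norm P \<le> \<beta>" and "l1_norm Q \<le> \<beta>"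
  shows "\<bar>relaxed_cost A W N R \<theta> d k P - relaxed_cost A W N R \<theta> d k Q\<bar>
    \<le> cost_lip_const n \<rho> \<alpha> (l1_norm W) d \<beta> * l1_norm (P - Q)"
  using assms
proof (induction d arbitrary: k \<beta> P Q)
  case 0
  let ?R = "wsum n N R \<theta> k"
  have R: "psd_mat n ?R" "l1_norm ?R \<le> \<rho>" using "0.prems"(1) by auto
  have "\<bar>mtrace (Phi ?R P) - mtrace (Phi ?R Q)\<bar> \<le> l1_norm (Phi ?R P - Phi ?R Q)"
    by (rule abs_mtrace_diff_le[OF Phi_mat Phi_mat]) (use R "0.prems" in auto)
  also have "\<dots> \<le> Phi_lip_const n \<rho> \<beta> * l1_norm (P - Q)"
    by (rule l1_norm_Phi_diff_le[OF R(1) "0.prems"(3,4) R(2) "0.prems"(5,6)])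
  finally show ?case using psd_matD(1)[OF "0.prems"(3)] psd_matD(1)[OF "0.prems"(4)] by simp
next
  case (Suc d)
  let ?R = "wsum n N R \<theta> k" and ?w = "l1_norm W"
  let ?P' = "hpred (A k) W (Phi ?R P)" and ?Q' = "hpred (A k) W (Phi ?R Q)"
  let ?c = "Phi_lip_const n \<rho> \<beta>" and ?L = "cost_lip_const n \<rho> \<alpha> ?w d (\<alpha>\<^sup>2 * (real n * \<beta>) + ?w)"
  have R: "psd_mat n ?R" "l1_norm ?R \<le> \<rho>" and A: "A k \<in> carrier_mat n n" "l1_norm (A k) \<le> \<alpha>"
    using Suc.prems(1) by auto
  note P = Suc.prems(3) and Q = Suc.prems(4) and W = psd_matD(1)[OF Suc.prems(2)]
  have "\<bar>mtrace (Phi ?R P) - mtrace (Phi ?R Q)\<bar> \<le> ?c * l1_norm (P - Q)"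
    using abs_mtrace_diff_le[OF Phi_mat[OF R(1) P] Phi_mat[OF R(1) Q]]
      l1_norm_Phi_diff_le[OF R(1) P Q R(2) Suc.prems(5,6)] by simp
  moreover have "\<bar>relaxed_cost A W N R \<theta> d (Suc k) ?P' - relaxed_cost A W N R \<theta> d (Suc k) ?Q'\<bar>
      \<le> ?L * l1_norm (?P' - ?Q')"
    by (rule Suc.IH)
      (use Suc.prems hpred_psd[OF Phi_psd[OF R(1)] A(1) Suc.prems(2)]
         l1_norm_hpred_Phi_le[OF R(1) _ A(1) W A(2)] in auto)
  moreover have "?L * l1_norm (?P' - ?Q') \<le> ?L * (\<alpha>\<^sup>2 * (?c * l1_norm (P - Q)))"
    using l1_norm_hpred_Phi_diff_le[OF R(1) P Q A(1) W R(2) A(2) Suc.prems(5,6)] cost_lip_const_nonneg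
    by (rule mult_left_mono)
  ultimately have "\<bar>relaxed_cost A W N R \<theta> (Suc d) k P - relaxed_cost A W N R \<theta> (Suc d) k Q\<bar>
      \<le> ?c * l1_norm (P - Q) + ?L * (\<alpha>\<^sup>2 * (?c * l1_norm (P - Q)))"
    using psd_matD(1)[OF P] psd_matD(1)[OF Q] by (simp add: Let_def)
  then show ?case by (simp add: algebra_simps)
qed

lemma abs_U_relaxed_diff_le:
  assumes N: "N \<ge> 1" and t: "t \<le> T"
    and A: "\<And>k. k \<le> T \<Longrightarrow> A k \<in> carrier_mat n n \<and> l1_norm (A k) \<le> \<alpha>"
    and W: "psd_mat n W"
    and R: "\<And>i k. i \<in> {1..N} \<Longrightarrow> k \<le> T \<Longrightarrow> psd_mat n (R i k)"
    and \<rho>: "\<And>k. k \<le> T \<Longrightarrow> (\<Sum>i=1..N. l1_norm (R i k)) \<le> \<rho>"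
    and P: "psd_mat n P" and Q: "psd_mat n Q" and lP: "l1_norm P \<le> \<beta>" and lQ: "l1_norm Q \<le> \<beta>"
  shows "\<bar>U_relaxed A W N R T t P - U_relaxed A W N R T t Q\<bar>
    \<le> cost_lip_const n \<rho> \<alpha> (l1_norm W) (T - t) \<beta> * l1_norm (P - Q)"
proof -
  let ?S = "relaxed_schedules N t T"
  have stages: "\<forall>j\<in>{t..t + (T - t)}. psd_mat n (wsum n N R \<theta> j) \<and> l1_norm (wsum n N R \<theta> j) \<le> \<rho>
      \<and> A j \<in> carrier_mat n n \<and> l1_norm (A j) \<le> \<alpha>" if "\<theta> \<in> ?S" for \<theta>
  proof
    fix j
    assume j: "j \<in> {t..t + (T - t)}"
    then have "\<forall>i\<in>{1..N}. psd_mat n (R i j) \<and> 0 \<le> \<theta> j i \<and> \<theta> j i \<le> 1"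
      using that t R unfolding relaxed_schedules_def by auto
    then show "psd_mat n (wsum n N R \<theta> j) \<and> l1_norm (wsum n N R \<theta> j) \<le> \<rho>
      \<and> A j \<in> carrier_mat n n \<and> l1_norm (A j) \<le> \<alpha>"
      using wsum_psd_l1_norm_le[of N n R j \<theta>] \<rho>[of j] A[of j] j t by auto
  qed
  have "(\<lambda>k i. if i = 1 then 1 else 0) \<in> ?S" using N unfolding relaxed_schedules_def by auto
  then have nonempty: "?S \<noteq> {}" by blast
  have bdd: "bdd_below ((\<lambda>\<theta>. relaxed_cost A W N R \<theta> (T - t) t M) ` ?S)" if M: "psd_mat n M" for M
  proof (rule bdd_belowI[of _ 0])
    fix c
    assume "c \<in> (\<lambda>\<theta>. relaxed_cost A W N R \<theta> (T - t) t M) ` ?S"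
    then obtain \<theta> where "\<theta> \<in> ?S" "c = relaxed_cost A W N R \<theta> (T - t) t M" by blast
    then show "0 \<le> c" using relaxed_cost_nonneg[OF _ W M] stages by simp
  qed
  show ?thesis unfolding U_relaxed_def
    by (rule abs_INF_diff_le[OF nonempty bdd[OF P] bdd[OF Q]])
      (rule relaxed_cost_lipschitz[OF stages W P Q lP lQ])
qed

lemma U_relaxed_lipschitz_l1_norm:
  assumes N: "N \<ge> 1"
    and A: "\<And>k. k \<le> T \<Longrightarrow> A k \<in> carrier_mat n n"
    and W: "psd_mat n W"
    and R: "\<And>i k. i \<in> {1..N} \<Longrightarrow> k \<le> T \<Longrightarrow> psd_mat n (R i k)"
  shows "\<exists>L\<ge>0. \<forall>t\<le>T. \<forall>P Q. psd_mat n P \<longrightarrow> psd_mat n Q \<longrightarrow> l1_norm P \<le> \<beta> \<longrightarrow> l1_norm Q \<le> \<beta> \<longrightarrow>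
    \<bar>U_relaxed A W N R T t P - U_relaxed A W N R T t Q\<bar> \<le> L * l1_norm (P - Q)"
proof -
  define \<rho> where "\<rho> = (\<Sum>k\<le>T. \<Sum>i=1..N. l1_norm (R i k))"
  define \<alpha> where "\<alpha> = (\<Sum>k\<le>T. l1_norm (A k))"
  define L where "L = (\<Sum>d\<le>T. cost_lip_const n \<rho> \<alpha> (l1_norm W) d \<beta>)"
  have \<rho>: "(\<Sum>i=1..N. l1_norm (R i k)) \<le> \<rho>" if "k \<le> T" for k
    unfolding \<rho>_def using that
    by (intro member_le_sum[where f = "\<lambda>k. \<Sum>i=1..N. l1_norm (R i k)"]) (auto intro: sum_nonneg l1_norm_nonneg)
  have \<alpha>: "A k \<in> carrier_mat n n \<and> l1_norm (A k) \<le> \<alpha>" if "k \<le> T" for k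
    unfolding \<alpha>_def using that A by (auto intro: member_le_sum l1_norm_nonneg)
  have L: "cost_lip_const n \<rho> \<alpha> (l1_norm W) (T - t) \<beta> \<le> L" for t
    unfolding L_def
    by (rule member_le_sum[where f = "\<lambda>d. cost_lip_const n \<rho> \<alpha> (l1_norm W) d \<beta>"])
      (auto simp: cost_lip_const_nonneg)
  show ?thesis
  proof (intro exI[of _ L] conjI allI impI)
    show "L \<ge> 0" unfolding L_def by (intro sum_nonneg cost_lip_const_nonneg)
    fix t P Q
    assume t: "t \<le> T" and P: "psd_mat n P" and Q: "psd_mat n Q"
      and lP: "l1_norm P \<le> \<beta>" and lQ: "l1_norm Q \<le> \<beta>"
    have "\<bar>U_relaxed A W N R T t P - U_relaxed A W N R T t Q\<bar>
        \<le> cost_lip_const n \<rho> \<alpha> (l1_norm W) (T - t) \<beta> * l1_norm (P - Q)"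
      by (rule abs_U_relaxed_diff_le[OF N t \<alpha> W R \<rho> P Q lP lQ])
    also have "\<dots> \<le> L * l1_norm (P - Q)" by (rule mult_right_mono[OF L l1_norm_nonneg])
    finally show "\<bar>U_relaxed A W N R T t P - U_relaxed A W N R T t Q\<bar> \<le> L * l1_norm (P - Q)" .
  qed
qed

theorem proposition4:
  fixes n N T :: nat
    and m :: "nat \<Rightarrow> nat"
    and A :: "nat \<Rightarrow> real mat"
    and W :: "real mat"
    and C :: "nat \<Rightarrow> nat \<Rightarrow> real mat"
    and V :: "nat \<Rightarrow> real mat"
    and B :: real
  assumes N_pos: "N \<ge> 1"
    and A_dim: "\<forall>k\<le>T. A k \<in> carrier_mat n n"
    and W_pd: "pd_mat n W"
    and C_dim: "\<forall>i\<in>{1..N}. \<forall>k\<le>T. C i k \<in> carrier_mat (m i) n"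
    and V_pd: "\<forall>i\<in>{1..N}. pd_mat (m i) (V i)"
    and B_pos: "B > 0"
  shows "\<exists>K>0. \<forall>t\<le>T. \<forall>P Q. psd_mat n P \<longrightarrow> psd_mat n Q \<longrightarrow>
           frob_norm P \<le> B \<longrightarrow> frob_norm Q \<le> B \<longrightarrow>
           \<bar>U_relaxed A W N (\<lambda>i k. info_mat (C i k) (V i)) T t P
            - U_relaxed A W N (\<lambda>i k. info_mat (C i k) (V i)) T t Q\<bar>
             \<le> K * frob_norm (P - Q)"
proof -
  let ?R = "\<lambda>i k. info_mat (C i k) (V i)" and ?\<beta> = "real n * real n * B"
  have "psd_mat n (?R i k)" if "i \<in> {1..N}" "k \<le> T" for i k
    using info_mat_psd C_dim V_pd that by blast
  then obtain L where L: "L \<ge> 0" and lip: "\<And>t P Q. t \<le> T \<Longrightarrow> psd_mat n P \<Longrightarrow> psd_mat n Q \<Longrightarrow>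
      l1_norm P \<le> ?\<beta> \<Longrightarrow> l1_norm Q \<le> ?\<beta> \<Longrightarrow>
      \<bar>U_relaxed A W N ?R T t P - U_relaxed A W N ?R T t Q\<bar> \<le> L * l1_norm (P - Q)"
    using U_relaxed_lipschitz_l1_norm[OF N_pos _ pd_imp_psd_mat[OF W_pd], of T A ?R ?\<beta>] A_dim by blast
  have l1_le: "l1_norm M \<le> real n * real n * frob_norm M" if "psd_mat n M" for M
    using l1_norm_le_frob_norm psd_matD(1)[OF that] by blast
  show ?thesis
  proof (intro exI[of _ "L * (real n * real n) + 1"] conjI allI impI)
    fix t P Q
    assume t: "t \<le> T" and P: "psd_mat n P" and Q: "psd_mat n Q"
      and fP: "frob_norm P \<le> B" and fQ: "frob_norm Q \<le> B"
    have "l1_norm P \<le> ?\<beta>" "l1_norm Q \<le> ?\<beta>"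
      using order.trans[OF l1_le[OF P]] order.trans[OF l1_le[OF Q]] fP fQ by (simp_all add: mult_left_mono)
    with lip[OF t P Q]
    have "\<bar>U_relaxed A W N ?R T t P - U_relaxed A W N ?R T t Q\<bar> \<le> L * l1_norm (P - Q)" by blast
    also have "\<dots> \<le> L * (real n * real n * frob_norm (P - Q))"
      using l1_norm_le_frob_norm[of "P - Q" n] psd_matD(1)[OF Q] L
      by (simp add: minus_carrier_mat mult_left_mono)
    also have "\<dots> \<le> (L * (real n * real n) + 1) * frob_norm (P - Q)"
      using frob_norm_nonneg[of "P - Q"] by (simp add: algebra_simps)
    finally show "\<bar>U_relaxed A W N ?R T t P - U_relaxed A W N ?R T t Q\<bar>
      \<le> (L * (real n * real n) + 1) * frob_norm (P - Q)" .
  qed (use L in \<open>simp add: add_nonneg_pos\<close>)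
qed

end
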